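(* Define $\alpha_n(q)$ (written $a_n(q^2)$ in the original) recursively by $\alpha_0(q)=0$ and $\alpha_n(q) = q^n +(1-q^{2n-2})\alpha_{n-1}(q)$ for $n\in\mathbb{N}$. Then for $q\in\mathbb{C}$ with $0<|q|<1$, \[ q^{-1}\lim_{n\to \infty} \alpha_n(q) = \frac{\left(q^2;q^2\right)_\infty}{\left(q;q^2\right)_\infty} = \sum_{n\geq 0} q^{\frac{n(n+1)}{2}} . \]
   Context: For $n\in\mathbb{N}_0\cup\{\infty\}$, $(a;q)_n := \prod_{j=0}^{n-1}(1-aq^j)$. *)

theory Defs
  imports "HOL-Analysis.Analysis"
begin

definition qpoch :: "complex \<Rightarrow> complex \<Rightarrow> nat \<Rightarrow> complex" where
  "qpoch a q n = (\<Prod>j<n. 1 - a * q ^ j)"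

definition qpoch_inf :: "complex \<Rightarrow> complex \<Rightarrow> complex" where
  "qpoch_inf a q = (\<Prod>j. 1 - a * q ^ j)"

fun alpha :: "complex \<Rightarrow> nat \<Rightarrow> complex" where
  "alpha q 0 = 0"
| "alpha q (Suc n) = q ^ Suc n + (1 - q ^ (2 * n)) * alpha q n"

end

theory Submission
  imports Defs
begin

(* Unrolling the recurrence gives alpha_(n+1) = q (q^2;q^2)_n Sum_(k<=n) q^k / (q^2;q^2)_k, so the
   limit is q (q^2;q^2)_inf / (q;q^2)_inf by Euler's identity Sum_k z^k / (p;p)_k = 1 / (z;p)_inf.
   The left-hand side E(z) of Euler's identity satisfies E(z) (1 - z) = E(p z); iterating gives
   E(z) (z;p)_n = E(p^n z), which tends to E(0) = 1.

   For Gauss's identity, the q-binomial theorem applied to Prod_(i<2n+1) (q^n + q^i) splits into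
   two halves that agree by the symmetry of the q-binomial coefficients, giving the polynomial identity
   (-q;q)_n^2 = Sum_(j<=n) q^(j(j+1)/2) [2n+1, n+1+j]_q.  Each coefficient tends to 1/(q;q)_inf, so
   by Tannery's theorem Sum_j q^(j(j+1)/2) = (q;q)_inf (-q;q)_inf^2, which is the claimed quotient
   because (q;q)(-q;q) = (q^2;q^2) and (q;q) = (q;q^2)(q^2;q^2). *)

section \<open>q-Pochhammer symbols\<close>

lemma qpoch_0 [simp]: "qpoch a p 0 = 1"
  by (simp add: qpoch_def)

lemma qpoch_Suc: "qpoch a p (Suc n) = qpoch a p n * (1 - a * p ^ n)"
  by (simp add: qpoch_def)

lemma norm_power2_less_one: "norm (q::complex) < 1 \<Longrightarrow> norm (q^2) < 1"
  by (simp add: norm_power power_less_one_iff)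

lemma qpoch_factor_nonzero:
  fixes a p :: complex
  assumes "norm a < 1" "norm p \<le> 1"
  shows "1 - a * p ^ j \<noteq> 0"
proof -
  have "norm (a * p ^ j) \<le> norm a"
    using assms by (simp add: norm_mult norm_power mult_left_le power_le_one)
  then have "a * p ^ j \<noteq> 1"
    using assms(1) by auto
  then show ?thesis
    by simp
qed

lemma qpoch_nonzero:
  assumes "norm a < 1" "norm p \<le> 1"
  shows "qpoch a p n \<noteq> 0"
  using qpoch_factor_nonzero[OF assms] by (simp add: qpoch_def)

lemma convergent_prod_qpoch:
  fixes a p :: complex
  assumes "norm a < 1" "norm p < 1"
  shows "convergent_prod (\<lambda>j. 1 - a * p ^ j)"
proof -
  have "summable (\<lambda>j. norm a * norm p ^ j)"
    using assms by (intro summable_mult summable_geometric) auto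
  then have "summable (\<lambda>j. norm (- (a * p ^ j)))"
    by (simp add: norm_mult norm_power)
  moreover have "- (a * p ^ j) \<noteq> -1" for j
    using qpoch_factor_nonzero[of a p j] assms by auto
  ultimately show ?thesis
    using summable_imp_convergent_prod_complex by fastforce
qed

lemma qpoch_tendsto:
  assumes "norm a < 1" "norm p < 1"
  shows "qpoch a p \<longlonglongrightarrow> qpoch_inf a p"
proof -
  have "(\<lambda>n. \<Prod>j\<le>n. 1 - a * p ^ j) \<longlonglongrightarrow> qpoch_inf a p"
    using convergent_prod_LIMSEQ[OF convergent_prod_qpoch[OF assms]] by (simp add: qpoch_inf_def)
  then show ?thesis
    using LIMSEQ_lessThan_iff_atMost[of "\<lambda>A. \<Prod>j\<in>A. 1 - a * p ^ j"]
    by (simp add: qpoch_def[abs_def])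
qed

lemma qpoch_inf_nonzero:
  assumes "norm a < 1" "norm p < 1"
  shows "qpoch_inf a p \<noteq> 0"
  unfolding qpoch_inf_def
  using assms by (intro prodinf_nonzero convergent_prod_qpoch qpoch_factor_nonzero) auto

lemma Bseq_qpoch:
  assumes "norm a < 1" "norm p < 1"
  shows "Bseq (qpoch a p)"
  using qpoch_tendsto[OF assms] by (rule convergent_imp_Bseq[OF convergentI])

lemma Bseq_inverse_qpoch:
  assumes "norm a < 1" "norm p < 1"
  shows "Bseq (\<lambda>n. inverse (qpoch a p n))"
  using Bfun_inverse[OF qpoch_tendsto qpoch_inf_nonzero] assms by blast

lemma summable_norm_powser_Bseq:
  fixes c :: "nat \<Rightarrow> 'a::real_normed_div_algebra"
  assumes "Bseq c" "norm z < 1"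
  shows "summable (\<lambda>n. norm (c n * z ^ n))"
proof -
  obtain K where K: "\<And>n. norm (c n) \<le> K"
    using assms(1) BseqE by metis
  show ?thesis
  proof (rule summable_comparison_test)
    show "\<exists>N. \<forall>n\<ge>N. norm (norm (c n * z ^ n)) \<le> K * norm z ^ n"
      using K by (auto simp: norm_mult norm_power intro!: mult_right_mono)
    show "summable (\<lambda>n. K * norm z ^ n)"
      using assms(2) by (intro summable_mult summable_geometric) auto
  qed
qed

section \<open>Euler's identity\<close>

definition euler_series :: "complex \<Rightarrow> complex \<Rightarrow> complex" where
  "euler_series p z = (\<Sum>k. inverse (qpoch p p k) * z ^ k)"

lemma euler_series_sums:
  assumes "norm p < 1" "norm z < 1"
  shows "(\<lambda>k. inverse (qpoch p p k) * z ^ k) sums euler_series p z"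
  unfolding euler_series_def
  using summable_norm_powser_Bseq[OF Bseq_inverse_qpoch[OF assms(1) assms(1)] assms(2)]
  by (rule summable_sums[OF summable_norm_cancel])

lemma euler_series_0 [simp]: "euler_series p 0 = 1"
  by (simp add: euler_series_def)

lemma isCont_euler_series_0:
  assumes "norm p < 1"
  shows "isCont (euler_series p) 0"
proof -
  have "summable (\<lambda>k. inverse (qpoch p p k) * (1/2) ^ k)"
    using summable_norm_powser_Bseq[OF Bseq_inverse_qpoch[OF assms assms], of "1/2"]
    by (rule summable_norm_cancel) simp
  then show ?thesis
    unfolding euler_series_def[abs_def] by (rule isCont_powser) simp
qed

lemma euler_series_functional_eq:
  assumes "norm p < 1" "norm z < 1"
  shows "euler_series p z * (1 - z) = euler_series p (p * z)"
proof -
  define c where "c k = inverse (qpoch p p k)" for k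
  have "norm (p * z) \<le> norm z"
    using assms by (simp add: norm_mult mult_left_le_one_le)
  then have pz: "norm (p * z) < 1"
    using assms(2) by linarith
  have "(\<lambda>k. c k * z ^ k - c k * (p * z) ^ k) sums (euler_series p z - euler_series p (p * z))"
    unfolding c_def by (intro sums_diff euler_series_sums assms pz)
  then have "(\<lambda>k. c (Suc k) * z ^ Suc k - c (Suc k) * (p * z) ^ Suc k) sums
      (euler_series p z - euler_series p (p * z))"
    by (subst sums_Suc_iff) simp
  moreover have "c (Suc k) * z ^ Suc k - c (Suc k) * (p * z) ^ Suc k = z * (c k * z ^ k)" for k
  proof -
    have "1 - p * p ^ k \<noteq> 0"
      using qpoch_factor_nonzero[of p p k] assms by simp
    then have c_Suc: "c (Suc k) * (1 - p * p ^ k) = c k"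
      by (simp add: c_def qpoch_Suc)
    have "c (Suc k) * z ^ Suc k - c (Suc k) * (p * z) ^ Suc k = z * z ^ k * (c (Suc k) * (1 - p * p ^ k))"
      by (simp add: power_mult_distrib algebra_simps)
    then show ?thesis
      by (simp add: c_Suc)
  qed
  ultimately have "(\<lambda>k. z * (c k * z ^ k)) sums (euler_series p z - euler_series p (p * z))"
    by simp
  moreover have "(\<lambda>k. z * (c k * z ^ k)) sums (z * euler_series p z)"
    unfolding c_def by (intro sums_mult euler_series_sums assms)
  ultimately have "euler_series p z - euler_series p (p * z) = z * euler_series p z"
    by (rule sums_unique2)
  then show ?thesis
    by (simp add: algebra_simps)
qed

lemma euler_series_mult_qpoch:
  assumes "norm p < 1" "norm z < 1"
  shows "euler_series p z * qpoch z p n = euler_series p (p ^ n * z)"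
proof (induction n)
  case (Suc n)
  have "norm (p ^ n * z) \<le> norm z"
    using assms by (simp add: norm_mult norm_power mult_left_le_one_le power_le_one)
  then have "norm (p ^ n * z) < 1"
    using assms(2) by linarith
  then have "euler_series p (p ^ n * z) * (1 - p ^ n * z) = euler_series p (p ^ Suc n * z)"
    using euler_series_functional_eq[OF assms(1)] by (simp add: mult.assoc)
  with Suc.IH show ?case
    by (simp add: qpoch_Suc mult.commute mult.left_commute flip: mult.assoc)
qed simp

theorem euler_identity:
  assumes "norm p < 1" "norm z < 1"
  shows "euler_series p z = 1 / qpoch_inf z p"
proof -
  have "(\<lambda>n. p ^ n * z) \<longlonglongrightarrow> 0"
    using assms(1) by (intro tendsto_mult_left_zero LIMSEQ_power_zero) simp
  then have "(\<lambda>n. euler_series p (p ^ n * z)) \<longlonglongrightarrow> 1"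
    using isCont_tendsto_compose[OF isCont_euler_series_0[OF assms(1)]] by simp
  then have "(\<lambda>n. euler_series p z * qpoch z p n) \<longlonglongrightarrow> 1"
    by (simp add: euler_series_mult_qpoch[OF assms])
  moreover have "(\<lambda>n. euler_series p z * qpoch z p n) \<longlonglongrightarrow> euler_series p z * qpoch_inf z p"
    using assms by (intro tendsto_mult tendsto_const qpoch_tendsto)
  ultimately have "euler_series p z * qpoch_inf z p = 1"
    using LIMSEQ_unique by blast
  then show ?thesis
    using qpoch_inf_nonzero[OF assms(2,1)] by (simp add: field_simps)
qed

section \<open>The limit of the recurrence\<close>

lemma alpha_Suc_eq:
  fixes q :: complex
  assumes "norm q < 1"
  shows "alpha q (Suc n) = q * qpoch (q^2) (q^2) n * (\<Sum>k\<le>n. inverse (qpoch (q^2) (q^2) k) * q ^ k)"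
proof (induction n)
  case (Suc n)
  have nz: "qpoch (q^2) (q^2) (Suc n) \<noteq> 0"
    using norm_power2_less_one[OF assms] by (intro qpoch_nonzero) simp_all
  have "q ^ (2 * Suc n) = q^2 * (q^2)^n"
    by (simp flip: power_mult power_add)
  then have "alpha q (Suc (Suc n)) = q ^ Suc (Suc n) + (1 - q^2 * (q^2)^n) * alpha q (Suc n)"
    by (simp only: alpha.simps(2)[of q "Suc n"])
  also have "\<dots> = q ^ Suc (Suc n)
      + q * qpoch (q^2) (q^2) (Suc n) * (\<Sum>k\<le>n. inverse (qpoch (q^2) (q^2) k) * q ^ k)"
    by (simp only: Suc.IH qpoch_Suc) (simp add: algebra_simps)
  also have "\<dots> = q * qpoch (q^2) (q^2) (Suc n) * (\<Sum>k\<le>Suc n. inverse (qpoch (q^2) (q^2) k) * q ^ k)"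
    using nz by (simp add: algebra_simps)
  finally show ?case .
qed simp

lemma alpha_tendsto:
  fixes q :: complex
  assumes "norm q < 1"
  shows "alpha q \<longlonglongrightarrow> q * qpoch_inf (q^2) (q^2) / qpoch_inf q (q^2)"
proof -
  have q2: "norm (q^2) < 1"
    using norm_power2_less_one[OF assms] .
  have "(\<lambda>n. \<Sum>k\<le>n. inverse (qpoch (q^2) (q^2) k) * q ^ k) \<longlonglongrightarrow> euler_series (q^2) q"
    using euler_series_sums[OF q2 assms] by (simp add: sums_def_le)
  then have "(\<lambda>n. alpha q (Suc n)) \<longlonglongrightarrow> q * qpoch_inf (q^2) (q^2) * euler_series (q^2) q"
    unfolding alpha_Suc_eq[OF assms] by (intro tendsto_mult tendsto_const qpoch_tendsto q2)
  then have "(\<lambda>n. alpha q (Suc n)) \<longlonglongrightarrow> q * qpoch_inf (q^2) (q^2) / qpoch_inf q (q^2)"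
    by (simp add: euler_identity[OF q2 assms] del: alpha.simps)
  then show ?thesis
    by (rule LIMSEQ_imp_Suc)
qed

section \<open>Gauss's identity\<close>

definition triangular :: "nat \<Rightarrow> nat" where
  "triangular k = (\<Sum>i<k. i)"

lemma triangular_0 [simp]: "triangular 0 = 0"
  by (simp add: triangular_def)

lemma triangular_Suc: "triangular (Suc k) = triangular k + k"
  by (simp add: triangular_def)

lemma double_triangular: "2 * triangular k + k = k * k"
  by (induction k) (auto simp: triangular_Suc)

lemma triangular_Suc_eq: "triangular (Suc n) = n * (n + 1) div 2"
  using double_triangular[of "Suc n"] by simp

definition qbinomial :: "complex \<Rightarrow> nat \<Rightarrow> nat \<Rightarrow> complex" where
  "qbinomial q N k = (if k \<le> N then qpoch q q N / (qpoch q q k * qpoch q q (N - k)) else 0)"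

lemma qbinomial_0_right:
  assumes "qpoch q q N \<noteq> 0"
  shows "qbinomial q N 0 = 1"
  using assms by (simp add: qbinomial_def)

lemma qbinomial_eq_0: "N < k \<Longrightarrow> qbinomial q N k = 0"
  by (simp add: qbinomial_def)

lemma qbinomial_symmetric: "k \<le> N \<Longrightarrow> qbinomial q N (N - k) = qbinomial q N k"
  by (simp add: qbinomial_def mult.commute)

lemma qbinomial_Suc_Suc:
  assumes nz: "\<And>n. qpoch q q n \<noteq> 0" and "k \<le> N"
  shows "qbinomial q (Suc N) (Suc k) = qbinomial q N (Suc k) + q ^ (N - k) * qbinomial q N k"
proof (cases "k = N")
  case True
  then show ?thesis
    using nz by (simp add: qbinomial_def)
next
  case False
  then obtain m where N: "N = Suc (k + m)"
    using assms(2) by (metis add_Suc_right le_neq_implies_less less_imp_Suc_add)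
  define a where "a = qpoch q q k"
  define b where "b = qpoch q q m"
  define c where "c = qpoch q q N"
  define u where "u = q * q ^ k"
  define v where "v = q * q ^ m"
  have nz_abuv: "a \<noteq> 0" "b \<noteq> 0" "1 - u \<noteq> 0" "1 - v \<noteq> 0"
    using nz[of k] nz[of m] nz[of "Suc k"] nz[of "Suc m"]
    by (simp_all add: a_def b_def u_def v_def qpoch_Suc)
  have "qbinomial q (Suc N) (Suc k) = c * (1 - u * v) / (a * (1 - u) * (b * (1 - v)))"
    by (simp add: qbinomial_def qpoch_Suc N a_def b_def c_def u_def v_def power_add algebra_simps)
  moreover have "qbinomial q N (Suc k) = c / (a * (1 - u) * b)"
    by (simp add: qbinomial_def qpoch_Suc N a_def b_def c_def u_def)
  moreover have "qbinomial q N k = c / (a * (b * (1 - v)))"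
    by (simp add: qbinomial_def qpoch_Suc N a_def b_def c_def v_def)
  moreover have "q ^ (N - k) = v"
    by (simp add: N v_def)
  moreover have "c * (1 - u * v) / (a * (1 - u) * (b * (1 - v)))
      = c / (a * (1 - u) * b) + v * (c / (a * (b * (1 - v))))"
  proof -
    have "c * (1 - u * v) = c * (1 - v) * 1 + v * c * (1 - u)"
      by (simp add: algebra_simps)
    then show ?thesis
      using nz_abuv by (simp add: add_divide_distrib)
  qed
  ultimately show ?thesis
    by simp
qed

theorem qbinomial_theorem:
  assumes nz: "\<And>n. qpoch q q n \<noteq> 0"
  shows "(\<Prod>i<N. y + x * q ^ i) = (\<Sum>k\<le>N. qbinomial q N k * q ^ triangular k * x ^ k * y ^ (N - k))"
proof (induction N)
  case 0
  then show ?case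
    using qbinomial_0_right[OF nz] by simp
next
  case (Suc N)
  define t where "t M k = qbinomial q M k * q ^ triangular k * x ^ k * y ^ (M - k)" for M k
  have t_Suc_Suc: "t (Suc N) (Suc k) = y * t N (Suc k) + x * q ^ N * t N k" if "k \<le> N" for k
  proof -
    have y_shift: "qbinomial q N (Suc k) * y ^ (N - k) = y * (qbinomial q N (Suc k) * y ^ (N - Suc k))"
    proof (cases "k = N")
      case False
      then have "N - k = Suc (N - Suc k)"
        using that by simp
      then show ?thesis
        by simp
    qed (simp add: qbinomial_eq_0)
    have q_shift: "q ^ (N - k) * q ^ triangular (Suc k) = q ^ N * q ^ triangular k"
      using that by (simp add: triangular_Suc flip: power_add)
    have "t (Suc N) (Suc k) = (qbinomial q N (Suc k) * y ^ (N - k)) * q ^ triangular (Suc k) * x ^ Suc k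
        + (q ^ (N - k) * q ^ triangular (Suc k)) * qbinomial q N k * x ^ Suc k * y ^ (N - k)"
      by (simp add: t_def qbinomial_Suc_Suc[OF nz that] algebra_simps)
    also have "\<dots> = y * t N (Suc k) + x * q ^ N * t N k"
      unfolding y_shift q_shift by (simp add: t_def algebra_simps)
    finally show ?thesis .
  qed
  have "(\<Sum>k\<le>Suc N. t (Suc N) k) = t (Suc N) 0 + (\<Sum>k\<le>N. t (Suc N) (Suc k))"
    by (rule sum.atMost_Suc_shift)
  also have "\<dots> = y * t N 0 + (\<Sum>k\<le>N. y * t N (Suc k) + x * q ^ N * t N k)"
    using qbinomial_0_right[OF nz] by (simp add: t_Suc_Suc) (simp add: t_def)
  also have "\<dots> = y * (t N 0 + (\<Sum>k\<le>N. t N (Suc k))) + x * q ^ N * (\<Sum>k\<le>N. t N k)"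
    by (simp add: sum.distrib sum_distrib_left algebra_simps)
  also have "t N 0 + (\<Sum>k\<le>N. t N (Suc k)) = (\<Sum>k\<le>Suc N. t N k)"
    by (rule sum.atMost_Suc_shift[symmetric])
  also have "\<dots> = (\<Sum>k\<le>N. t N k)"
    by (simp add: t_def qbinomial_eq_0)
  finally show ?case
    using Suc.IH by (simp add: t_def algebra_simps)
qed

lemma (in comm_monoid_set) lessThan_add:
  fixes m n :: nat
  shows "F g {..<m + n} = F g {..<m} \<^bold>* F (\<lambda>i. g (m + i)) {..<n}"
  by (induction n) (simp_all add: ac_simps)

lemma prod_power_add_power:
  fixes q :: complex
  shows "(\<Prod>i<2*n+1. q ^ n + q ^ i) = 2 * q ^ (triangular n + n + n * n) * qpoch (-q) q n ^ 2"
proof -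
  have lower: "(\<Prod>i<n. q ^ n + q ^ i) = q ^ triangular n * qpoch (-q) q n"
  proof -
    have "(\<Prod>i<n. q ^ n + q ^ i) = (\<Prod>i<n. q ^ i * (1 + q * q ^ (n - Suc i)))"
    proof (rule prod.cong)
      fix i
      assume "i \<in> {..<n}"
      then have "q ^ i * (q * q ^ (n - Suc i)) = q ^ n"
        by (simp flip: power_add power_Suc)
      then show "q ^ n + q ^ i = q ^ i * (1 + q * q ^ (n - Suc i))"
        by (simp add: algebra_simps)
    qed simp
    also have "\<dots> = (\<Prod>i<n. q ^ i) * (\<Prod>i<n. 1 + q * q ^ i)"
      by (simp add: prod.distrib prod.nat_diff_reindex[where g = "\<lambda>i. 1 + q * q ^ i"])
    finally show ?thesis
      by (simp add: triangular_def qpoch_def power_sum)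
  qed
  have "(\<Prod>i<n. q ^ n + q ^ (Suc n + i)) = (\<Prod>i<n. q ^ n * (1 + q * q ^ i))"
    by (simp add: algebra_simps power_add)
  also have "\<dots> = q ^ (n * n) * qpoch (-q) q n"
    by (simp add: qpoch_def prod.distrib power_mult)
  finally have upper: "(\<Prod>i<n. q ^ n + q ^ (Suc n + i)) = q ^ (n * n) * qpoch (-q) q n" .
  have "(\<Prod>i<2*n+1. q ^ n + q ^ i) = (\<Prod>i<Suc n + n. q ^ n + q ^ i)"
    by (rule arg_cong[where f = "\<lambda>m. \<Prod>i<m. q ^ n + q ^ i"]) simp
  also have "\<dots> = (\<Prod>i<n. q ^ n + q ^ i) * (q ^ n + q ^ n) * (\<Prod>i<n. q ^ n + q ^ (Suc n + i))"
    by (simp only: prod.lessThan_add prod.lessThan_Suc)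
  also have "\<dots> = 2 * q ^ (triangular n + n + n * n) * qpoch (-q) q n ^ 2"
    unfolding lower upper by (simp add: power_add power2_eq_square algebra_simps)
  finally show ?thesis .
qed

lemma triangular_exponent_lower:
  assumes "j \<le> n"
  shows "triangular (n - j) + n * (2*n+1 - (n - j)) = triangular n + n + n*n + triangular (Suc j)"
proof -
  obtain m where n: "n = j + m"
    using assms le_Suc_ex by blast
  show ?thesis
    using double_triangular[of m] double_triangular[of "j + m"] double_triangular[of "Suc j"]
    by (simp add: n algebra_simps triangular_Suc)
qed

lemma triangular_exponent_upper:
  assumes "j \<le> n"
  shows "triangular (Suc n + j) + n * (2*n+1 - (Suc n + j)) = triangular n + n + n*n + triangular (Suc j)"
proof -
  obtain m where n: "n = j + m"
    using assms le_Suc_ex by blast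
  show ?thesis
    using double_triangular[of "Suc (j + m) + j"] double_triangular[of "j + m"] double_triangular[of "Suc j"]
    by (simp add: n algebra_simps triangular_Suc)
qed

lemma finite_gauss_identity:
  assumes nz: "\<And>n. qpoch q q n \<noteq> 0" and "q \<noteq> 0"
  shows "qpoch (-q) q n ^ 2 = (\<Sum>j\<le>n. q ^ triangular (Suc j) * qbinomial q (2*n+1) (Suc n + j))"
    (is "_ = ?S")
proof -
  define E where "E = triangular n + n + n * n"
  define t where "t k = qbinomial q (2*n+1) k * q ^ triangular k * 1 ^ k * (q ^ n) ^ (2*n+1 - k)" for k
  have t_lower: "t (n - j) = q ^ E * (q ^ triangular (Suc j) * qbinomial q (2*n+1) (Suc n + j))"
    if "j \<le> n" for j
  proof -
    have "qbinomial q (2*n+1) (n - j) = qbinomial q (2*n+1) (Suc n + j)"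
      using qbinomial_symmetric[of "Suc n + j" "2*n+1" q] that by simp
    then show ?thesis
      using triangular_exponent_lower[OF that]
      by (simp add: t_def E_def algebra_simps flip: power_mult power_add)
  qed
  have t_upper: "t (Suc n + j) = q ^ E * (q ^ triangular (Suc j) * qbinomial q (2*n+1) (Suc n + j))"
    if "j \<le> n" for j
    using triangular_exponent_upper[OF that]
    by (simp add: t_def E_def algebra_simps flip: power_mult power_add)
  have split_range: "{..2*n+1} = {..<Suc n + Suc n}"
    by auto
  have "(\<Prod>i<2*n+1. q ^ n + 1 * q ^ i) = (\<Sum>k\<le>2*n+1. t k)"
    unfolding t_def by (rule qbinomial_theorem[OF nz])
  then have "2 * q ^ E * qpoch (-q) q n ^ 2 = (\<Sum>k\<le>2*n+1. t k)"
    by (simp only: mult_1 prod_power_add_power E_def)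
  also have "\<dots> = (\<Sum>j\<le>n. t (n - j)) + (\<Sum>j\<le>n. t (Suc n + j))"
    unfolding split_range sum.lessThan_add
    using sum.nat_diff_reindex[of t "Suc n"] by (simp add: lessThan_Suc_atMost)
  also have "\<dots> = q ^ E * ?S + q ^ E * ?S"
    unfolding sum_distrib_left using t_lower t_upper by (intro arg_cong2[where f = "(+)"] sum.cong) auto
  finally show ?thesis
    using \<open>q \<noteq> 0\<close> by (simp add: mult_2 [symmetric])
qed

lemma qbinomial_bounded:
  assumes "norm q < 1"
  obtains C where "\<And>N k. norm (qbinomial q N k) \<le> C"
proof -
  obtain B where B: "\<And>n. norm (qpoch q q n) \<le> B"
    using Bseq_qpoch[OF assms assms] BseqE by metis
  obtain K where K: "\<And>n. norm (inverse (qpoch q q n)) \<le> K"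
    using Bseq_inverse_qpoch[OF assms assms] BseqE by metis
  have "norm (qbinomial q N k) \<le> B * (K * K)" for N k
  proof (cases "k \<le> N")
    case True
    have "norm (qbinomial q N k)
        = norm (qpoch q q N) * (norm (inverse (qpoch q q k)) * norm (inverse (qpoch q q (N - k))))"
      using True by (simp add: qbinomial_def norm_divide norm_mult divide_inverse)
    also have "\<dots> \<le> B * (K * K)"
      using B K by (intro mult_mono) (auto intro: order_trans[OF norm_ge_zero])
    finally show ?thesis .
  next
    case False
    then show ?thesis
      using order_trans[OF norm_ge_zero B] order_trans[OF norm_ge_zero K] by (simp add: qbinomial_def)
  qed
  then show thesis
    by (rule that)
qed

lemma qbinomial_tendsto:
  assumes "norm q < 1" and "filterlim a at_top F" "filterlim b at_top F"
  shows "((\<lambda>x. qbinomial q (a x + b x) (a x)) \<longlongrightarrow> 1 / qpoch_inf q q) F"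
proof -
  have "filterlim (\<lambda>x. a x + b x) at_top F"
    using assms(2) by (rule filterlim_at_top_mono) simp
  then have "((\<lambda>x. qpoch q q (a x + b x) / (qpoch q q (a x) * qpoch q q (b x)))
      \<longlongrightarrow> qpoch_inf q q / (qpoch_inf q q * qpoch_inf q q)) F"
    using assms qpoch_inf_nonzero[OF assms(1,1)]
    by (intro tendsto_intros filterlim_compose[OF qpoch_tendsto[OF assms(1,1)]]) simp_all
  then show ?thesis
    using qpoch_inf_nonzero[OF assms(1,1)] by (simp add: qbinomial_def)
qed

lemma summable_power_triangular:
  fixes r :: real
  assumes "0 \<le> r" "r < 1"
  shows "summable (\<lambda>j. r ^ triangular (Suc j))"
proof (rule summable_comparison_test)
  show "\<exists>N. \<forall>j\<ge>N. norm (r ^ triangular (Suc j)) \<le> r ^ j"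
    using assms by (auto intro!: power_decreasing simp: triangular_Suc)
  show "summable (\<lambda>j. r ^ j)"
    using assms by (intro summable_geometric) simp
qed

lemma gauss_identity_qpoch:
  fixes q :: complex
  assumes "norm q < 1" "q \<noteq> 0"
  shows "(\<lambda>j. q ^ triangular (Suc j)) sums (qpoch_inf q q * qpoch_inf (-q) q ^ 2)"
proof -
  define a where "a j n = q ^ triangular (Suc j) * qbinomial q (2*n+1) (Suc n + j)" for j n
  obtain C where C: "\<And>N k. norm (qbinomial q N k) \<le> C"
    using qbinomial_bounded[OF assms(1)] by blast
  have a_tendsto: "(\<lambda>n. a j n) \<longlonglongrightarrow> q ^ triangular (Suc j) * (1 / qpoch_inf q q)" for j
  proof -
    have "(\<lambda>n. qbinomial q ((n + Suc j) + (n - j)) (n + Suc j)) \<longlonglongrightarrow> 1 / qpoch_inf q q"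
      using assms(1) filterlim_add_const_nat_at_top filterlim_minus_const_nat_at_top
      by (rule qbinomial_tendsto)
    moreover have "\<forall>\<^sub>F n in sequentially.
        qbinomial q ((n + Suc j) + (n - j)) (n + Suc j) = qbinomial q (2*n+1) (Suc n + j)"
      using eventually_ge_at_top[of j] by eventually_elim (simp add: mult_2)
    ultimately show ?thesis
      unfolding a_def by (intro tendsto_mult tendsto_const) (simp add: tendsto_cong)
  qed
  have bound: "\<forall>\<^sub>F (j, n) in at_top \<times>\<^sub>F sequentially. norm (a j n) \<le> norm q ^ triangular (Suc j) * C"
    using C by (intro always_eventually) (auto simp: a_def norm_mult norm_power intro: mult_left_mono)
  have "summable (\<lambda>j. norm q ^ triangular (Suc j) * C)"
    using assms(1) by (intro summable_mult2 summable_power_triangular) simp_all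
  from tannerys_theorem[OF a_tendsto bound this]
  have tannery: "(\<lambda>n. \<Sum>j. a j n) \<longlonglongrightarrow> (\<Sum>j. q ^ triangular (Suc j) * (1 / qpoch_inf q q))"
    by simp
  have "(\<Sum>j. a j n) = qpoch (-q) q n ^ 2" for n
  proof -
    have "(\<Sum>j. a j n) = (\<Sum>j\<le>n. a j n)"
      by (rule suminf_finite) (auto simp: a_def qbinomial_eq_0)
    then show ?thesis
      using finite_gauss_identity[OF qpoch_nonzero assms(2)] assms(1) by (simp add: a_def)
  qed
  with tannery have "(\<lambda>n. qpoch (-q) q n ^ 2) \<longlonglongrightarrow> (\<Sum>j. q ^ triangular (Suc j) * (1 / qpoch_inf q q))"
    by simp
  moreover have "(\<lambda>n. qpoch (-q) q n ^ 2) \<longlonglongrightarrow> qpoch_inf (-q) q ^ 2"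
    using assms(1) by (intro tendsto_power qpoch_tendsto) simp_all
  ultimately have limit: "(\<Sum>j. q ^ triangular (Suc j) * (1 / qpoch_inf q q)) = qpoch_inf (-q) q ^ 2"
    by (rule LIMSEQ_unique)
  have "summable (\<lambda>j. q ^ triangular (Suc j))"
    using summable_power_triangular[of "norm q"] assms(1)
    by (intro summable_norm_cancel[of "\<lambda>j. q ^ triangular (Suc j)"]) (simp add: norm_power)
  moreover have "(\<Sum>j. q ^ triangular (Suc j)) = qpoch_inf q q * qpoch_inf (-q) q ^ 2"
    using suminf_mult2[OF calculation, of "1 / qpoch_inf q q"] limit qpoch_inf_nonzero[OF assms(1,1)]
    by (simp add: field_simps)
  ultimately show ?thesis
    by (metis summable_sums)
qed

lemma qpoch_mult_qpoch_minus: "qpoch q q n * qpoch (-q) q n = qpoch (q^2) (q^2) n"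
  unfolding qpoch_def prod.distrib[symmetric]
  by (rule prod.cong) (simp_all add: algebra_simps power2_eq_square power_mult_distrib)

lemma qpoch_double: "qpoch q q (2*n) = qpoch q (q^2) n * qpoch (q^2) (q^2) n"
proof (induction n)
  case (Suc n)
  have "q * q ^ (2*n) = q * (q^2)^n" "q * q ^ Suc (2*n) = q^2 * (q^2)^n"
    by (simp_all add: power_mult power2_eq_square)
  then have "qpoch q q (Suc (Suc (2*n)))
      = qpoch q (q^2) n * (1 - q * (q^2)^n) * (qpoch (q^2) (q^2) n * (1 - q^2 * (q^2)^n))"
    by (simp only: qpoch_Suc Suc.IH) (simp add: algebra_simps)
  then show ?case
    by (simp add: qpoch_Suc)
qed simp

lemma qpoch_inf_mult_qpoch_inf_minus:
  fixes q :: complex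
  assumes "norm q < 1"
  shows "qpoch_inf q q * qpoch_inf (-q) q = qpoch_inf (q^2) (q^2)"
proof -
  have "(\<lambda>n. qpoch q q n * qpoch (-q) q n) \<longlonglongrightarrow> qpoch_inf q q * qpoch_inf (-q) q"
    using assms by (intro tendsto_mult qpoch_tendsto) simp_all
  moreover have "(\<lambda>n. qpoch q q n * qpoch (-q) q n) \<longlonglongrightarrow> qpoch_inf (q^2) (q^2)"
    unfolding qpoch_mult_qpoch_minus using norm_power2_less_one[OF assms] by (intro qpoch_tendsto)
  ultimately show ?thesis
    by (rule LIMSEQ_unique)
qed

lemma qpoch_inf_double:
  fixes q :: complex
  assumes "norm q < 1"
  shows "qpoch_inf q q = qpoch_inf q (q^2) * qpoch_inf (q^2) (q^2)"
proof -
  have "(\<lambda>n. qpoch q q (2*n)) \<longlonglongrightarrow> qpoch_inf q q"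
    using filterlim_compose[OF qpoch_tendsto[OF assms assms] mult_nat_left_at_top[of 2]] by simp
  moreover have "(\<lambda>n. qpoch q q (2*n)) \<longlonglongrightarrow> qpoch_inf q (q^2) * qpoch_inf (q^2) (q^2)"
    unfolding qpoch_double using assms norm_power2_less_one[OF assms] by (intro tendsto_mult qpoch_tendsto)
  ultimately show ?thesis
    by (rule LIMSEQ_unique)
qed

lemma qpoch_inf_minus:
  fixes q :: complex
  assumes "norm q < 1"
  shows "qpoch_inf (-q) q = 1 / qpoch_inf q (q^2)"
proof -
  have q2: "norm (q^2) < 1"
    using norm_power2_less_one[OF assms] .
  show ?thesis
    using qpoch_inf_mult_qpoch_inf_minus[OF assms] qpoch_inf_double[OF assms]
      qpoch_inf_nonzero[OF q2 q2] qpoch_inf_nonzero[OF assms q2]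
    by (simp add: field_simps)
qed

theorem gauss_identity:
  fixes q :: complex
  assumes "norm q < 1" "q \<noteq> 0"
  shows "(\<lambda>n. q ^ (n * (n + 1) div 2)) sums (qpoch_inf (q^2) (q^2) / qpoch_inf q (q^2))"
proof -
  have "qpoch_inf q q * qpoch_inf (-q) q ^ 2 = (qpoch_inf q q * qpoch_inf (-q) q) * qpoch_inf (-q) q"
    by (simp only: power2_eq_square mult.assoc)
  also have "\<dots> = qpoch_inf (q^2) (q^2) / qpoch_inf q (q^2)"
    using qpoch_inf_mult_qpoch_inf_minus[OF assms(1)] qpoch_inf_minus[OF assms(1)]
    by simp
  finally have "qpoch_inf q q * qpoch_inf (-q) q ^ 2 = qpoch_inf (q^2) (q^2) / qpoch_inf q (q^2)" .
  with gauss_identity_qpoch[OF assms] show ?thesis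
    by (simp add: triangular_Suc_eq)
qed

theorem corollary4p2:
  fixes q :: complex
  assumes "0 < norm q" and "norm q < 1"
  shows "convergent (alpha q)
    \<and> lim (alpha q) / q = qpoch_inf (q^2) (q^2) / qpoch_inf q (q^2)
    \<and> (\<lambda>n. q ^ (n * (n + 1) div 2)) sums (qpoch_inf (q^2) (q^2) / qpoch_inf q (q^2))"
proof -
  have q0: "q \<noteq> 0"
    using assms(1) by auto
  have "alpha q \<longlonglongrightarrow> q * qpoch_inf (q^2) (q^2) / qpoch_inf q (q^2)"
    using alpha_tendsto[OF assms(2)] .
  then have "convergent (alpha q)" and "lim (alpha q) = q * qpoch_inf (q^2) (q^2) / qpoch_inf q (q^2)"
    by (auto intro: convergentI limI)
  then show ?thesis
    using gauss_identity[OF assms(2) q0] q0 by simp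
qed

end
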